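(* Let $L$ be an infinite set and let $Q$ be either the edgeless cube $Q_L$ or the edged cube $\bar Q_L$. If $s$ is a universally convergent basic sequence and $f$ is the terminal labelling obtained by applying $s$ to the identity labelling of $Q$, then $f:Q\to Q$ is a bijection, and $f(C)=C$ for every cluster $C$.
   Context: Let $L$ be an infinite set, $-L=\{-r:r\in L\}$ a disjoint copy of $L$, and $0$ a new element; $L^\dagger=-L\cup\{0\}\cup L$ with $-(-r)=r$, $-0=0$. Adjoin $\pm\infty$ with $-(+\infty)=-\infty$ and set $\bar L^\dagger=L^\dagger\cup\{\pm\infty\}$. Points of $U=(\bar L^\dagger)^3$ have coordinates $x,y,z$. The edgeless cube $Q_L$ is the set of points of $U$ with exactly one coordinate in $\{\pm\infty\}$ (cells). The edged cube $\bar Q_L$ is the set of cells $(p,i)$ with $p\in U$, $i\in\{x,y,z\}$, $p_i\in\{\pm\infty\}$ ($i$ marks the face). For $i\in\{x,y,z\}$, $\alpha\in\bar L^\dagger$, the quarter-turn twist $T_{i,\alpha}$ is the permutation of cells fixing every cell whose point $p$ has $p_i\ne\alpha$ and acting on the others by $T_{x,\alpha}(\alpha,y,z)=(\alpha,-z,y)$, $T_{y,\alpha}(x,\alpha,z)=(z,\alpha,-x)$, $T_{z,\alpha}(x,y,\alpha)=(-y,x,\alpha)$ (in $\bar Q_L$ the marked coordinate is carried along by the rotation). Basic twists are $T,T^2,T^3$ for quarter-turn twists $T$. A basic sequence is a sequence $\langle\sigma_\eta:\eta<\theta\rangle$ of basic twists of ordinal length $\theta$. A labelling is a map $f$ from cells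 to $X\cup\{\mathrm{NaC}\}$ for a set $X\not\ni\mathrm{NaC}$; it is legal if it never takes value NaC. A twist $\sigma$ acts by $(\sigma f)(c)=f(\sigma^{-1}c)$. Applying $\langle\sigma_\eta:\eta<\theta\rangle$ to $f_0$ produces $f_{\eta+1}=\sigma_\eta f_\eta$, and for limit $\lambda\le\theta$, $f_\lambda(c)$ is the eventually constant value of $f_\eta(c)$ ($\eta<\lambda$) if it exists and NaC otherwise; $f_\theta$ is the terminal labelling. The identity labelling labels each cell by itself (values in the set of cells); a basic sequence is universally convergent if its terminal labelling from the identity labelling is legal. The cluster of a cell is its orbit under the group generated by all quarter-turn twists. *)

theory Defs
  imports Main
begin

text \<open>Elements of the extended set: Pos r = r, Neg r = -r, Zero = 0, PInf/NInf = +inf/-inf.\<close>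
datatype 'l crd = Pos 'l | Neg 'l | Zero | PInf | NInf

fun cneg :: "'l crd \<Rightarrow> 'l crd" where
  "cneg (Pos r) = Neg r" | "cneg (Neg r) = Pos r" | "cneg Zero = Zero"
| "cneg PInf = NInf" | "cneg NInf = PInf"

definition is_inf :: "'l crd \<Rightarrow> bool" where
  "is_inf a \<longleftrightarrow> a = PInf \<or> a = NInf"

datatype axis = AX | AY | AZ

type_synonym 'l point = "'l crd \<times> 'l crd \<times> 'l crd"

fun coord :: "axis \<Rightarrow> 'l point \<Rightarrow> 'l crd" where
  "coord AX (x,y,z) = x" | "coord AY (x,y,z) = y" | "coord AZ (x,y,z) = z"

fun rot :: "axis \<Rightarrow> 'l point \<Rightarrow> 'l point" where
  "rot AX (x,y,z) = (x, cneg z, y)"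
| "rot AY (x,y,z) = (z, y, cneg x)"
| "rot AZ (x,y,z) = (cneg y, x, z)"

text \<open>Where the rotation about axis i carries the coordinate axis j.\<close>
fun rotax :: "axis \<Rightarrow> axis \<Rightarrow> axis" where
  "rotax AX AX = AX" | "rotax AX AY = AZ" | "rotax AX AZ = AY"
| "rotax AY AY = AY" | "rotax AY AZ = AX" | "rotax AY AX = AZ"
| "rotax AZ AZ = AZ" | "rotax AZ AX = AY" | "rotax AZ AY = AX"

text \<open>Quarter-turn twist T_{i,alpha} on points (edgeless cube) and on marked cells (edged cube).\<close>
definition twist_pt :: "axis \<times> 'l crd \<Rightarrow> 'l point \<Rightarrow> 'l point" where
  "twist_pt t p = (if coord (fst t) p = snd t then rot (fst t) p else p)"

definition twist_ed :: "axis \<times> 'l crd \<Rightarrow> 'l point \<times> axis \<Rightarrow> 'l point \<times> axis" where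
  "twist_ed t c = (if coord (fst t) (fst c) = snd t
                   then (rot (fst t) (fst c), rotax (fst t) (snd c)) else c)"

definition Q_edgeless :: "'l point set" where
  "Q_edgeless = {p. card {i. is_inf (coord i p)} = 1}"

definition Q_edged :: "('l point \<times> axis) set" where
  "Q_edged = {(p,i). is_inf (coord i p)}"

text \<open>A basic twist T^k (k in {1,2,3}) is represented by (quarter-turn data, k).\<close>
type_synonym 'l basic_twist = "(axis \<times> 'l crd) \<times> nat"

definition bapply :: "('q \<Rightarrow> 'c \<Rightarrow> 'c) \<Rightarrow> ('q \<times> nat) \<Rightarrow> 'c \<Rightarrow> 'c" where
  "bapply tw s = (tw (fst s)) ^^ (snd s)"

text \<open>Inverse of T^k is T^(4-k) (T has order dividing 4).\<close>
definition binv :: "('q \<Rightarrow> 'c \<Rightarrow> 'c) \<Rightarrow> ('q \<times> nat) \<Rightarrow> 'c \<Rightarrow> 'c" where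
  "binv tw s = (tw (fst s)) ^^ (4 - snd s)"

text \<open>A basic sequence of ordinal length theta: indices eta < theta in a well-order.\<close>
definition basic_seq :: "('o::wellorder \<Rightarrow> 'q \<times> nat) \<Rightarrow> 'o \<Rightarrow> bool" where
  "basic_seq \<sigma> \<theta> \<longleftrightarrow> (\<forall>\<eta><\<theta>. snd (\<sigma> \<eta>) \<in> {1,2,3})"

text \<open>Labellings: None plays the role of NaC. Action: (sigma f)(c) = f(sigma^-1 c).\<close>
definition act :: "('q \<Rightarrow> 'c \<Rightarrow> 'c) \<Rightarrow> ('q \<times> nat) \<Rightarrow> ('c \<Rightarrow> 'x option) \<Rightarrow> 'c \<Rightarrow> 'x option" where
  "act tw s f c = f (binv tw s c)"

definition run_step ::
  "('q \<Rightarrow> 'c \<Rightarrow> 'c) \<Rightarrow> ('o::wellorder \<Rightarrow> 'q \<times> nat) \<Rightarrow> ('c \<Rightarrow> 'x option)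
   \<Rightarrow> ('o \<Rightarrow> 'c \<Rightarrow> 'x option) \<Rightarrow> 'o \<Rightarrow> 'c \<Rightarrow> 'x option" where
  "run_step tw \<sigma> f0 R \<eta> =
    (if \<not> (\<exists>\<xi>. \<xi> < \<eta>) then f0
     else if (\<exists>\<xi><\<eta>. \<forall>\<zeta><\<eta>. \<zeta> \<le> \<xi>)
       then (let \<xi> = (THE \<xi>. \<xi> < \<eta> \<and> (\<forall>\<zeta><\<eta>. \<zeta> \<le> \<xi>)) in act tw (\<sigma> \<xi>) (R \<xi>))
     else (\<lambda>c. if (\<exists>\<xi><\<eta>. \<forall>\<zeta>. \<xi> \<le> \<zeta> \<and> \<zeta> < \<eta> \<longrightarrow> R \<zeta> c = R \<xi> c)
               then (THE v. \<exists>\<xi><\<eta>. \<forall>\<zeta>. \<xi> \<le> \<zeta> \<and> \<zeta> < \<eta> \<longrightarrow> R \<zeta> c = v)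
               else None))"

definition run ::
  "('q \<Rightarrow> 'c \<Rightarrow> 'c) \<Rightarrow> ('o::wellorder \<Rightarrow> 'q \<times> nat) \<Rightarrow> ('c \<Rightarrow> 'x option) \<Rightarrow> 'o \<Rightarrow> 'c \<Rightarrow> 'x option" where
  "run tw \<sigma> f0 = wfrec {(a,b). a < b} (run_step tw \<sigma> f0)"

definition terminal_id :: "('q \<Rightarrow> 'c \<Rightarrow> 'c) \<Rightarrow> ('o::wellorder \<Rightarrow> 'q \<times> nat) \<Rightarrow> 'o \<Rightarrow> 'c \<Rightarrow> 'c option" where
  "terminal_id tw \<sigma> \<theta> = run tw \<sigma> Some \<theta>"

definition univ_convergent :: "'c set \<Rightarrow> ('q \<Rightarrow> 'c \<Rightarrow> 'c) \<Rightarrow> ('o::wellorder \<Rightarrow> 'q \<times> nat) \<Rightarrow> 'o \<Rightarrow> bool" where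
  "univ_convergent Q tw \<sigma> \<theta> \<longleftrightarrow> (\<forall>c\<in>Q. terminal_id tw \<sigma> \<theta> c \<noteq> None)"

text \<open>Cluster: orbit under the group generated by all quarter-turn twists
  (closed under each twist and its inverse T^3).\<close>
inductive_set cluster :: "('q \<Rightarrow> 'c \<Rightarrow> 'c) \<Rightarrow> 'c \<Rightarrow> 'c set" for tw c where
  base: "c \<in> cluster tw c"
| fwd: "d \<in> cluster tw c \<Longrightarrow> tw t d \<in> cluster tw c"
| bwd: "d \<in> cluster tw c \<Longrightarrow> (tw t ^^ 3) d \<in> cluster tw c"

definition conclusion :: "'c set \<Rightarrow> ('q \<Rightarrow> 'c \<Rightarrow> 'c) \<Rightarrow> ('o::wellorder \<Rightarrow> 'q \<times> nat) \<Rightarrow> 'o \<Rightarrow> bool" where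
  "conclusion Q tw \<sigma> \<theta> \<longleftrightarrow>
     (let f = (\<lambda>c. the (terminal_id tw \<sigma> \<theta> c)) in
      bij_betw f Q Q \<and> (\<forall>c\<in>Q. f ` cluster tw c = cluster tw c))"

end

theory Submission
  imports Defs
begin

(*
  Every stage f_eta of the run from the identity labelling is a partial injection sending
  each cell to a cell of its own cluster. This holds initially, is preserved by a basic twist
  because f_eta is precomposed with an injective power of a quarter-turn, and survives limits
  because a defined limit value is attained from some stage on, so two cells with the same limit
  value already share a value at an earlier stage. If the terminal labelling is legal, it is
  therefore an injection of Q into itself mapping each cluster into itself; clusters are finite
  (all coordinates of a cluster are among the six signed coordinates of one of its cells), so it
  maps each cluster onto itself and hence is a bijection of Q.
*)

lemma run_unfold:
  fixes \<sigma> :: "'o::wellorder \<Rightarrow> 'q \<times> nat" and f0 :: "'c \<Rightarrow> 'x option"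
  shows "run tw \<sigma> f0 \<eta> = run_step tw \<sigma> f0 (run tw \<sigma> f0) \<eta>"
proof -
  have "adm_wf {(a, b). a < b} (run_step tw \<sigma> f0)"
    unfolding adm_wf_def
  proof (intro allI impI)
    fix F G :: "'o \<Rightarrow> 'c \<Rightarrow> 'x option" and \<eta> :: 'o
    assume "\<forall>\<xi>. (\<xi>, \<eta>) \<in> {(a, b). a < b} \<longrightarrow> F \<xi> = G \<xi>"
    then have FG: "\<xi> < \<eta> \<Longrightarrow> F \<xi> = G \<xi>" for \<xi> by blast
    have last_stage: "F (THE \<xi>. \<xi> < \<eta> \<and> (\<forall>\<zeta><\<eta>. \<zeta> \<le> \<xi>)) = G (THE \<xi>. \<xi> < \<eta> \<and> (\<forall>\<zeta><\<eta>. \<zeta> \<le> \<xi>))"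
      if "\<exists>\<xi><\<eta>. \<forall>\<zeta><\<eta>. \<zeta> \<le> \<xi>"
    proof -
      from that obtain \<xi> where \<xi>: "\<xi> < \<eta>" "\<forall>\<zeta><\<eta>. \<zeta> \<le> \<xi>" by blast
      then have "(THE \<xi>. \<xi> < \<eta> \<and> (\<forall>\<zeta><\<eta>. \<zeta> \<le> \<xi>)) = \<xi>"
        by (intro the_equality) (auto intro: antisym)
      with \<xi> show ?thesis using FG by simp
    qed
    have limit_value: "(\<lambda>v. \<exists>\<xi><\<eta>. \<forall>\<zeta>. \<xi> \<le> \<zeta> \<and> \<zeta> < \<eta> \<longrightarrow> F \<zeta> c = v) =
        (\<lambda>v. \<exists>\<xi><\<eta>. \<forall>\<zeta>. \<xi> \<le> \<zeta> \<and> \<zeta> < \<eta> \<longrightarrow> G \<zeta> c = v)" for c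
      using FG by (simp cong: conj_cong)
    have limit_exists: "(\<exists>\<xi><\<eta>. \<forall>\<zeta>. \<xi> \<le> \<zeta> \<and> \<zeta> < \<eta> \<longrightarrow> F \<zeta> c = F \<xi> c) \<longleftrightarrow>
        (\<exists>\<xi><\<eta>. \<forall>\<zeta>. \<xi> \<le> \<zeta> \<and> \<zeta> < \<eta> \<longrightarrow> G \<zeta> c = G \<xi> c)" for c
      using FG by (simp cong: conj_cong)
    show "run_step tw \<sigma> f0 F \<eta> = run_step tw \<sigma> f0 G \<eta>"
      unfolding run_step_def Let_def limit_value limit_exists
      using last_stage by (cases "\<exists>\<xi><\<eta>. \<forall>\<zeta><\<eta>. \<zeta> \<le> \<xi>") (simp_all only: if_True if_False)
  qed
  then have "run tw \<sigma> f0 = run_step tw \<sigma> f0 (run tw \<sigma> f0)"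
    unfolding run_def by (rule wfrec_fixpoint[OF wf])
  then show ?thesis by (rule fun_cong)
qed

lemma run_initial:
  fixes \<sigma> :: "'o::wellorder \<Rightarrow> 'q \<times> nat"
  assumes "\<not> (\<exists>\<xi>. \<xi> < \<eta>)"
  shows "run tw \<sigma> f0 \<eta> = f0"
  using assms by (subst run_unfold) (simp add: run_step_def)

lemma run_successor:
  fixes \<sigma> :: "'o::wellorder \<Rightarrow> 'q \<times> nat"
  assumes "\<xi> < \<eta>" and "\<forall>\<zeta><\<eta>. \<zeta> \<le> \<xi>"
  shows "run tw \<sigma> f0 \<eta> = act tw (\<sigma> \<xi>) (run tw \<sigma> f0 \<xi>)"
proof -
  have "(THE \<xi>. \<xi> < \<eta> \<and> (\<forall>\<zeta><\<eta>. \<zeta> \<le> \<xi>)) = \<xi>"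
    using assms by (intro the_equality) (auto intro: antisym)
  with assms show ?thesis
    by (subst run_unfold) (auto simp: run_step_def Let_def)
qed

lemma run_limit_Some:
  fixes \<sigma> :: "'o::wellorder \<Rightarrow> 'q \<times> nat"
  assumes nonempty: "\<xi>\<^sub>0 < \<eta>" and limit: "\<forall>\<xi><\<eta>. \<exists>\<zeta><\<eta>. \<xi> < \<zeta>"
    and defined: "run tw \<sigma> f0 \<eta> c = Some v"
  shows "\<exists>\<xi><\<eta>. \<forall>\<zeta>. \<xi> \<le> \<zeta> \<and> \<zeta> < \<eta> \<longrightarrow> run tw \<sigma> f0 \<zeta> c = Some v"
proof -
  let ?f = "run tw \<sigma> f0"
  let ?stable = "\<lambda>\<xi> w. \<xi> < \<eta> \<and> (\<forall>\<zeta>. \<xi> \<le> \<zeta> \<and> \<zeta> < \<eta> \<longrightarrow> ?f \<zeta> c = w)"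
  have stable_unique: "w = w'" if "?stable \<xi> w" "?stable \<xi>' w'" for \<xi> \<xi>' w w'
    using that by (metis max.cobounded1 max.cobounded2 max_less_iff_conj)
  have not_initial: "(\<not> (\<exists>\<xi>. \<xi> < \<eta>)) = False"
    using nonempty by blast
  have no_last: "(\<exists>\<xi><\<eta>. \<forall>\<zeta><\<eta>. \<zeta> \<le> \<xi>) = False"
    using limit by (meson leD)
  have unfolded: "?f \<eta> c = (if \<exists>\<xi>. ?stable \<xi> (?f \<xi> c) then THE w. \<exists>\<xi>. ?stable \<xi> w else None)"
    by (subst run_unfold) (simp only: run_step_def not_initial no_last if_False)
  then have stable_exists: "\<exists>\<xi>. ?stable \<xi> (?f \<xi> c)"
    using defined by (metis option.distinct(1))
  then obtain \<xi> where \<xi>: "?stable \<xi> (?f \<xi> c)" ..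
  have limit_value: "(THE w. \<exists>\<xi>. ?stable \<xi> w) = ?f \<xi> c"
  proof (rule the_equality)
    show "\<exists>\<xi>'. ?stable \<xi>' (?f \<xi> c)" using \<xi> by blast
    show "w = ?f \<xi> c" if "\<exists>\<xi>'. ?stable \<xi>' w" for w
      using that \<xi> stable_unique by blast
  qed
  have "?f \<eta> c = ?f \<xi> c"
    using unfolded unfolding if_P[OF stable_exists] limit_value .
  with defined have "?f \<xi> c = Some v" by simp
  with \<xi> show ?thesis by metis
qed

lemma cluster_trans: "e \<in> cluster tw d \<Longrightarrow> d \<in> cluster tw c \<Longrightarrow> e \<in> cluster tw c"
  by (induction rule: cluster.induct) (auto intro: cluster.intros)

lemma funpow_in_cluster: "(tw t ^^ n) c \<in> cluster tw c"
  by (induction n) (auto intro: cluster.intros)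

lemma cluster_subset:
  assumes closed: "\<And>t d. d \<in> S \<Longrightarrow> tw t d \<in> S" and "c \<in> S"
  shows "cluster tw c \<subseteq> S"
proof
  have funpow_closed: "(tw t ^^ n) d \<in> S" if "d \<in> S" for t n d
    using that closed by (induction n) auto
  show "d \<in> S" if "d \<in> cluster tw c" for d
    using that by (induction rule: cluster.induct) (auto simp: \<open>c \<in> S\<close> closed funpow_closed)
qed

definition cluster_preserving_inj :: "('q \<Rightarrow> 'c \<Rightarrow> 'c) \<Rightarrow> ('c \<Rightarrow> 'c option) \<Rightarrow> bool" where
  "cluster_preserving_inj tw g \<longleftrightarrow>
     (\<forall>c v. g c = Some v \<longrightarrow> v \<in> cluster tw c) \<and>
     (\<forall>c d v. g c = Some v \<longrightarrow> g d = Some v \<longrightarrow> c = d)"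

lemma cluster_preserving_inj_Some: "cluster_preserving_inj tw Some"
  by (simp add: cluster_preserving_inj_def cluster.base)

lemma cluster_preserving_inj_act:
  assumes g: "cluster_preserving_inj tw g" and inj: "inj (tw (fst s))"
  shows "cluster_preserving_inj tw (act tw s g)"
proof -
  let ?h = "tw (fst s) ^^ (4 - snd s)"
  have act: "act tw s g c = g (?h c)" for c
    by (simp add: act_def binv_def)
  have "inj ?h"
    using inj by (rule inj_fn)
  moreover have "v \<in> cluster tw c" if "g (?h c) = Some v" for c v
    using g that funpow_in_cluster cluster_trans unfolding cluster_preserving_inj_def by metis
  ultimately show ?thesis
    using g unfolding cluster_preserving_inj_def act by (metis injD)
qed

lemma cluster_preserving_inj_run:
  fixes \<sigma> :: "'o::wellorder \<Rightarrow> 'q \<times> nat"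
  assumes inj: "\<And>t. inj (tw t)"
  shows "cluster_preserving_inj tw (run tw \<sigma> Some \<eta>)"
proof (induction \<eta> rule: less_induct)
  case (less \<eta>)
  let ?f = "run tw \<sigma> Some"
  consider (initial) "\<not> (\<exists>\<xi>. \<xi> < \<eta>)"
    | (successor) \<xi> where "\<xi> < \<eta>" "\<forall>\<zeta><\<eta>. \<zeta> \<le> \<xi>"
    | (limit) \<xi>\<^sub>0 where "\<xi>\<^sub>0 < \<eta>" "\<forall>\<xi><\<eta>. \<exists>\<zeta><\<eta>. \<xi> < \<zeta>"
    by (metis not_le)
  then show ?case
  proof cases
    case initial
    then show ?thesis
      by (simp add: run_initial cluster_preserving_inj_Some)
  next
    case successor
    then show ?thesis
      by (simp add: run_successor cluster_preserving_inj_act inj less.IH)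
  next
    case limit
    note eventually_Some = run_limit_Some[OF limit]
    have "v \<in> cluster tw c" if "?f \<eta> c = Some v" for c v
      using eventually_Some[OF that] less.IH unfolding cluster_preserving_inj_def by blast
    moreover have "c = d" if limit_values: "?f \<eta> c = Some v" "?f \<eta> d = Some v" for c d v
    proof -
      obtain \<xi>\<^sub>c where
        "\<xi>\<^sub>c < \<eta>" "\<forall>\<zeta>. \<xi>\<^sub>c \<le> \<zeta> \<and> \<zeta> < \<eta> \<longrightarrow> ?f \<zeta> c = Some v"
        using eventually_Some[OF limit_values(1)] by blast
      moreover obtain \<xi>\<^sub>d where
        "\<xi>\<^sub>d < \<eta>" "\<forall>\<zeta>. \<xi>\<^sub>d \<le> \<zeta> \<and> \<zeta> < \<eta> \<longrightarrow> ?f \<zeta> d = Some v"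
        using eventually_Some[OF limit_values(2)] by blast
      ultimately have "?f (max \<xi>\<^sub>c \<xi>\<^sub>d) c = Some v" "?f (max \<xi>\<^sub>c \<xi>\<^sub>d) d = Some v"
        "max \<xi>\<^sub>c \<xi>\<^sub>d < \<eta>"
        by auto
      with less.IH show "c = d"
        unfolding cluster_preserving_inj_def by blast
    qed
    ultimately show ?thesis
      unfolding cluster_preserving_inj_def by blast
  qed
qed

lemma image_cluster_eq_if_inj_on:
  assumes "inj_on f Q" and into: "\<And>c. c \<in> Q \<Longrightarrow> f c \<in> cluster tw c"
    and within: "cluster tw c \<subseteq> Q" and "finite (cluster tw c)"
  shows "f ` cluster tw c = cluster tw c"
proof (rule endo_inj_surj)
  show "f ` cluster tw c \<subseteq> cluster tw c"
  proof (rule image_subsetI)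
    fix d assume "d \<in> cluster tw c"
    with into within have "f d \<in> cluster tw d" by blast
    then show "f d \<in> cluster tw c"
      using \<open>d \<in> cluster tw c\<close> by (rule cluster_trans)
  qed
  show "inj_on f (cluster tw c)"
    using \<open>inj_on f Q\<close> within by (rule inj_on_subset)
qed fact

lemma conclusion_if_univ_convergent:
  fixes \<sigma> :: "'o::wellorder \<Rightarrow> 'q \<times> nat"
  assumes inj: "\<And>t. inj (tw t)"
    and closed: "\<And>t c. c \<in> Q \<Longrightarrow> tw t c \<in> Q"
    and finite: "\<And>c. c \<in> Q \<Longrightarrow> finite (cluster tw c)"
    and "univ_convergent Q tw \<sigma> \<theta>"
  shows "conclusion Q tw \<sigma> \<theta>"
proof -
  let ?g = "terminal_id tw \<sigma> \<theta>"
  define f where "f c = the (?g c)" for c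
  have g: "cluster_preserving_inj tw ?g"
    unfolding terminal_id_def using inj by (rule cluster_preserving_inj_run)
  have total: "?g c = Some (f c)" if "c \<in> Q" for c
    using \<open>univ_convergent Q tw \<sigma> \<theta>\<close> that by (auto simp: univ_convergent_def f_def)
  have within: "cluster tw c \<subseteq> Q" if "c \<in> Q" for c
    using closed that by (rule cluster_subset)
  have into: "f c \<in> cluster tw c" if "c \<in> Q" for c
    using g total[OF that] unfolding cluster_preserving_inj_def by blast
  have "inj_on f Q"
    using g total unfolding cluster_preserving_inj_def by (metis inj_onI)
  then have clusters: "f ` cluster tw c = cluster tw c" if "c \<in> Q" for c
    using into within[OF that] finite[OF that] by (rule image_cluster_eq_if_inj_on)
  have "f ` Q = Q"
  proof
    show "f ` Q \<subseteq> Q"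
      using into within by blast
    show "Q \<subseteq> f ` Q"
    proof
      fix c assume "c \<in> Q"
      have "c \<in> f ` cluster tw c"
        unfolding clusters[OF \<open>c \<in> Q\<close>] by (rule cluster.base)
      with within[OF \<open>c \<in> Q\<close>] show "c \<in> f ` Q" by blast
    qed
  qed
  with \<open>inj_on f Q\<close> clusters show ?thesis
    unfolding conclusion_def Let_def f_def bij_betw_def by simp
qed

lemma cneg_cneg [simp]: "cneg (cneg a) = a"
  by (cases a) auto

lemma is_inf_cneg [simp]: "is_inf (cneg a) = is_inf a"
  by (cases a) (auto simp: is_inf_def)

lemma rotax_rotax [simp]: "rotax a (rotax a i) = i"
  by (cases a; cases i) auto

lemma is_inf_coord_rot: "is_inf (coord (rotax a i) (rot a p)) = is_inf (coord i p)"
  by (cases p; cases a; cases i) auto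

lemma finite_UNIV_axis [simp]: "finite (UNIV :: axis set)"
proof -
  have UNIV_eq: "(UNIV :: axis set) = {AX, AY, AZ}"
    using axis.exhaust by blast
  show ?thesis
    by (subst UNIV_eq) simp
qed

lemma twist_pt_funpow_3_cancel: "(twist_pt t ^^ 3) (twist_pt t p) = p"
  by (cases t; cases p; cases "fst t") (auto simp: twist_pt_def numeral_eq_Suc)

lemma twist_ed_funpow_3_cancel: "(twist_ed t ^^ 3) (twist_ed t c) = c"
  by (cases t; cases c; cases "fst t"; cases "snd c") (auto simp: twist_ed_def numeral_eq_Suc)

lemma inj_twist_pt: "inj (twist_pt t)"
  using twist_pt_funpow_3_cancel by (rule inj_on_inverseI)

lemma inj_twist_ed: "inj (twist_ed t)"
  using twist_ed_funpow_3_cancel by (rule inj_on_inverseI)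

lemma infinite_axes_rot:
  "{i. is_inf (coord i (rot a p))} = rotax a ` {i. is_inf (coord i p)}" (is "?L = ?R")
proof
  show "?L \<subseteq> ?R"
  proof
    fix i assume "i \<in> ?L"
    then have "rotax a i \<in> {i. is_inf (coord i p)}"
      using is_inf_coord_rot[of a "rotax a i" p] by simp
    then show "i \<in> ?R"
      by (rule rev_image_eqI) simp
  qed
  show "?R \<subseteq> ?L"
    by (auto simp: is_inf_coord_rot)
qed

lemma twist_pt_in_Q_edgeless:
  assumes "p \<in> Q_edgeless"
  shows "twist_pt t p \<in> Q_edgeless"
proof -
  have "inj_on (rotax a) A" for a A
    by (metis inj_onI rotax_rotax)
  then have "card {i. is_inf (coord i (rot a p))} = card {i. is_inf (coord i p)}" for a
    unfolding infinite_axes_rot by (simp add: card_image)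
  with assms show ?thesis
    by (simp add: Q_edgeless_def twist_pt_def)
qed

lemma twist_ed_in_Q_edged: "c \<in> Q_edged \<Longrightarrow> twist_ed t c \<in> Q_edged"
  by (auto simp: Q_edged_def twist_ed_def is_inf_coord_rot)

fun signed_coords :: "'l point \<Rightarrow> 'l crd set" where
  "signed_coords (x, y, z) = {x, y, z, cneg x, cneg y, cneg z}"

abbreviation signed_box :: "'l point \<Rightarrow> 'l point set" where
  "signed_box p \<equiv> signed_coords p \<times> signed_coords p \<times> signed_coords p"

lemma in_signed_box: "p \<in> signed_box p"
  by (cases p rule: prod_cases3) simp

lemma cneg_in_signed_coords: "u \<in> signed_coords p \<Longrightarrow> cneg u \<in> signed_coords p"
  by (cases p) auto

lemma twist_pt_in_signed_box: "q \<in> signed_box p \<Longrightarrow> twist_pt t q \<in> signed_box p"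
  by (cases t; cases q; cases "fst t") (auto simp: twist_pt_def cneg_in_signed_coords)

lemma twist_ed_in_signed_box:
  "c \<in> signed_box p \<times> UNIV \<Longrightarrow> twist_ed t c \<in> signed_box p \<times> UNIV"
  by (cases t; cases c; cases "fst t") (auto simp: twist_ed_def cneg_in_signed_coords)

lemma finite_cluster_twist_pt: "finite (cluster twist_pt p)"
proof (rule finite_subset)
  show "cluster twist_pt p \<subseteq> signed_box p"
    using twist_pt_in_signed_box in_signed_box by (rule cluster_subset)
qed (cases p rule: prod_cases3; simp)

lemma finite_cluster_twist_ed: "finite (cluster twist_ed c)"
proof (rule finite_subset)
  show "cluster twist_ed c \<subseteq> signed_box (fst c) \<times> UNIV"
  proof (rule cluster_subset)
    show "c \<in> signed_box (fst c) \<times> UNIV"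
      by (metis in_signed_box UNIV_I mem_Times_iff)
  qed (rule twist_ed_in_signed_box)
qed (cases "fst c" rule: prod_cases3; simp)

theorem mainTheorem19:
  fixes \<sigma> :: "'o::wellorder \<Rightarrow> 'l basic_twist" and \<theta> :: 'o
  assumes "infinite (UNIV :: 'l set)"
    and "basic_seq \<sigma> \<theta>"
  shows "(univ_convergent (Q_edgeless :: 'l point set) twist_pt \<sigma> \<theta>
            \<longrightarrow> conclusion (Q_edgeless :: 'l point set) twist_pt \<sigma> \<theta>)
       \<and> (univ_convergent (Q_edged :: ('l point \<times> axis) set) twist_ed \<sigma> \<theta>
            \<longrightarrow> conclusion (Q_edged :: ('l point \<times> axis) set) twist_ed \<sigma> \<theta>)"
  using conclusion_if_univ_convergent[OF inj_twist_pt twist_pt_in_Q_edgeless finite_cluster_twist_pt]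
    conclusion_if_univ_convergent[OF inj_twist_ed twist_ed_in_Q_edged finite_cluster_twist_ed]
  by blast

end
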